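(* Let $\mathcal G=(V_{\min},V_{\max},E,w,\lambda)$ be an improving discounted payoff game, $\sigma$ a joint strategy, and $\nu$ a basis valuation of $H$ minimising $f_\sigma$ over all solutions of $H$, with $f_\sigma(\nu)\neq0$. Assume there are no local improvements of $\sigma$ for $\nu$, i.e. $\mathsf{offset}(\nu,(v,v'))\ge\mathsf{offset}(\nu,(v,\sigma(v)))$ for all $(v,v')\in E$. Let $E'$ be a given set of edges with $E_\nu\subseteq E'\subseteq S^\sigma_\nu$ containing an outgoing edge of every vertex. Then there exist a neighbouring valuation $\nu''$ of $\nu$ and a joint strategy $\sigma'$ with $f_{\sigma'}(\nu'')<f_\sigma(\nu)$; such a $\sigma'$ is better than $\sigma$, and it can be chosen such that $(v,\sigma'(v))\in E'$ for all $v\in V$.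
   Context: A discounted payoff game is a tuple $\mathcal G=(V_{\min},V_{\max},E,w,\lambda)$ with $V=V_{\min}\cup V_{\max}$ finite (disjoint union of Min and Max vertices), $E\subseteq V\times V$ with every vertex having an outgoing edge, $w:E\to\mathbb R$, $\lambda:E\to[0,1)$. A joint strategy is a map $\sigma:V\to V$ with $(v,\sigma(v))\in E$ for all $v$. $H$ is the system of inequations over $x\in\mathbb R^V$ containing, for each edge $e=(v,v')$, $I_e$: $x(v)\ge w_e+\lambda_e x(v')$ if $v\in V_{\max}$ and $x(v)\le w_e+\lambda_e x(v')$ if $v\in V_{\min}$. A basis of $H$ is a set of $|V|$ inequations of $H$ whose equality versions have a unique common solution; if that solution satisfies $H$ it is the basis valuation of that basis. $\mathsf{offset}(x,(v,v'))=x(v)-(w_{(v,v')}+\lambda_{(v,v')}x(v'))$ if $v\in V_{\max}$, and $(w_{(v,v')}+\lambda_{(v,v')}x(v'))-x(v)$ otherwise; $f_\sigma(x)=\sum_{v\in V}\mathsf{offset}(x,(v,\sigma(v)))$. $S^\sigma_\nu=\{(v,v')\in E\mid \mathsf{offset}(\nu,(v,v'))=\mathsf{offset}(\nu,(v,\sigma(v)))\}$ and $E_\nu=\{(v,v')\in E\mid\mathsf{offset}(\nu,(v,v'))=0\}$. A joint strategy $\sigma'$ is better than $\sigma$ iff $\min\{f_{\sigma'}(x)\mid x\text{ solves }H\}<\min\{f_{\sigma}(x)\mid x\text{ solves }H\}$. The game is sharp if every basis valuation satisfies exactly $|V|$ inequations of $H$ with equality (so it is the valuation of a unique basis). A sharp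 game is improving if for every joint strategy $\sigma$ and every basis valuation $\nu$ that does not minimise $f_\sigma$ over the solutions of $H$, there is a basis obtained from the basis of $\nu$ by exchanging exactly one inequation whose basis valuation $\nu'$ satisfies $f_\sigma(\nu')<f_\sigma(\nu)$. A neighbouring valuation of $\nu$ is a basis valuation of a basis obtained from the basis of $\nu$ by exchanging exactly one inequation. *)

theory Defs
  imports Complex_Main
begin

(* Vertices: the finite type 'v (V = UNIV). V_max = Vmax, V_min = UNIV - Vmax.
   Edges are pairs; w and lam are weight and discount of an edge. *)

definition discounted_game :: "('v::finite) set \<Rightarrow> ('v \<times> 'v) set \<Rightarrow> ('v \<times> 'v \<Rightarrow> real) \<Rightarrow> bool" where
  "discounted_game Vmax E lam \<longleftrightarrow>
     (\<forall>v. \<exists>v'. (v, v') \<in> E) \<and> (\<forall>e\<in>E. 0 \<le> lam e \<and> lam e < 1)"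

definition ineq :: "'v set \<Rightarrow> ('v \<times> 'v \<Rightarrow> real) \<Rightarrow> ('v \<times> 'v \<Rightarrow> real) \<Rightarrow> 'v \<times> 'v \<Rightarrow> ('v \<Rightarrow> real) \<Rightarrow> bool" where
  "ineq Vmax w lam e x \<longleftrightarrow>
     (if fst e \<in> Vmax then x (fst e) \<ge> w e + lam e * x (snd e)
      else x (fst e) \<le> w e + lam e * x (snd e))"

definition eqn :: "('v \<times> 'v \<Rightarrow> real) \<Rightarrow> ('v \<times> 'v \<Rightarrow> real) \<Rightarrow> 'v \<times> 'v \<Rightarrow> ('v \<Rightarrow> real) \<Rightarrow> bool" where
  "eqn w lam e x \<longleftrightarrow> x (fst e) = w e + lam e * x (snd e)"

definition solves_H :: "'v set \<Rightarrow> ('v \<times> 'v) set \<Rightarrow> ('v \<times> 'v \<Rightarrow> real) \<Rightarrow> ('v \<times> 'v \<Rightarrow> real) \<Rightarrow> ('v \<Rightarrow> real) \<Rightarrow> bool" where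
  "solves_H Vmax E w lam x \<longleftrightarrow> (\<forall>e\<in>E. ineq Vmax w lam e x)"

(* B (a set of inequations of H, indexed by edges) is a basis *)
definition is_basis :: "('v::finite \<times> 'v) set \<Rightarrow> ('v \<times> 'v \<Rightarrow> real) \<Rightarrow> ('v \<times> 'v \<Rightarrow> real) \<Rightarrow> ('v \<times> 'v) set \<Rightarrow> bool" where
  "is_basis E w lam B \<longleftrightarrow> B \<subseteq> E \<and> card B = card (UNIV :: 'v set) \<and>
     (\<exists>!x. \<forall>e\<in>B. eqn w lam e x)"

definition basis_valuation :: "'v::finite set \<Rightarrow> ('v \<times> 'v) set \<Rightarrow> ('v \<times> 'v \<Rightarrow> real) \<Rightarrow> ('v \<times> 'v \<Rightarrow> real) \<Rightarrow> ('v \<times> 'v) set \<Rightarrow> ('v \<Rightarrow> real) \<Rightarrow> bool" where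
  "basis_valuation Vmax E w lam B nu \<longleftrightarrow> is_basis E w lam B \<and>
     (\<forall>e\<in>B. eqn w lam e nu) \<and> solves_H Vmax E w lam nu"

definition is_basis_valuation :: "'v::finite set \<Rightarrow> ('v \<times> 'v) set \<Rightarrow> ('v \<times> 'v \<Rightarrow> real) \<Rightarrow> ('v \<times> 'v \<Rightarrow> real) \<Rightarrow> ('v \<Rightarrow> real) \<Rightarrow> bool" where
  "is_basis_valuation Vmax E w lam nu \<longleftrightarrow> (\<exists>B. basis_valuation Vmax E w lam B nu)"

definition offset :: "'v set \<Rightarrow> ('v \<times> 'v \<Rightarrow> real) \<Rightarrow> ('v \<times> 'v \<Rightarrow> real) \<Rightarrow> ('v \<Rightarrow> real) \<Rightarrow> 'v \<times> 'v \<Rightarrow> real" where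
  "offset Vmax w lam x e =
     (if fst e \<in> Vmax then x (fst e) - (w e + lam e * x (snd e))
      else (w e + lam e * x (snd e)) - x (fst e))"

definition joint_strategy :: "('v \<times> 'v) set \<Rightarrow> ('v \<Rightarrow> 'v) \<Rightarrow> bool" where
  "joint_strategy E \<sigma> \<longleftrightarrow> (\<forall>v. (v, \<sigma> v) \<in> E)"

definition f_strat :: "'v::finite set \<Rightarrow> ('v \<times> 'v \<Rightarrow> real) \<Rightarrow> ('v \<times> 'v \<Rightarrow> real) \<Rightarrow> ('v \<Rightarrow> 'v) \<Rightarrow> ('v \<Rightarrow> real) \<Rightarrow> real" where
  "f_strat Vmax w lam \<sigma> x = (\<Sum>v\<in>UNIV. offset Vmax w lam x (v, \<sigma> v))"

definition S_set :: "'v set \<Rightarrow> ('v \<times> 'v) set \<Rightarrow> ('v \<times> 'v \<Rightarrow> real) \<Rightarrow> ('v \<times> 'v \<Rightarrow> real) \<Rightarrow> ('v \<Rightarrow> 'v) \<Rightarrow> ('v \<Rightarrow> real) \<Rightarrow> ('v \<times> 'v) set" where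
  "S_set Vmax E w lam \<sigma> nu =
     {e \<in> E. offset Vmax w lam nu e = offset Vmax w lam nu (fst e, \<sigma> (fst e))}"

definition E_tight :: "'v set \<Rightarrow> ('v \<times> 'v) set \<Rightarrow> ('v \<times> 'v \<Rightarrow> real) \<Rightarrow> ('v \<times> 'v \<Rightarrow> real) \<Rightarrow> ('v \<Rightarrow> real) \<Rightarrow> ('v \<times> 'v) set" where
  "E_tight Vmax E w lam nu = {e \<in> E. offset Vmax w lam nu e = 0}"

definition min_f :: "'v::finite set \<Rightarrow> ('v \<times> 'v) set \<Rightarrow> ('v \<times> 'v \<Rightarrow> real) \<Rightarrow> ('v \<times> 'v \<Rightarrow> real) \<Rightarrow> ('v \<Rightarrow> 'v) \<Rightarrow> real" where
  "min_f Vmax E w lam \<sigma> = Inf (f_strat Vmax w lam \<sigma> ` {x. solves_H Vmax E w lam x})"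

definition better :: "'v::finite set \<Rightarrow> ('v \<times> 'v) set \<Rightarrow> ('v \<times> 'v \<Rightarrow> real) \<Rightarrow> ('v \<times> 'v \<Rightarrow> real) \<Rightarrow> ('v \<Rightarrow> 'v) \<Rightarrow> ('v \<Rightarrow> 'v) \<Rightarrow> bool" where
  "better Vmax E w lam \<sigma>' \<sigma> \<longleftrightarrow> min_f Vmax E w lam \<sigma>' < min_f Vmax E w lam \<sigma>"

definition minimises :: "'v::finite set \<Rightarrow> ('v \<times> 'v) set \<Rightarrow> ('v \<times> 'v \<Rightarrow> real) \<Rightarrow> ('v \<times> 'v \<Rightarrow> real) \<Rightarrow> ('v \<Rightarrow> 'v) \<Rightarrow> ('v \<Rightarrow> real) \<Rightarrow> bool" where
  "minimises Vmax E w lam \<sigma> nu \<longleftrightarrow> solves_H Vmax E w lam nu \<and>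
     (\<forall>x. solves_H Vmax E w lam x \<longrightarrow> f_strat Vmax w lam \<sigma> nu \<le> f_strat Vmax w lam \<sigma> x)"

definition sharp :: "'v::finite set \<Rightarrow> ('v \<times> 'v) set \<Rightarrow> ('v \<times> 'v \<Rightarrow> real) \<Rightarrow> ('v \<times> 'v \<Rightarrow> real) \<Rightarrow> bool" where
  "sharp Vmax E w lam \<longleftrightarrow> (\<forall>nu. is_basis_valuation Vmax E w lam nu \<longrightarrow>
      card {e \<in> E. eqn w lam e nu} = card (UNIV :: 'v set))"

definition exchange :: "('v \<times> 'v) set \<Rightarrow> ('v \<times> 'v) set \<Rightarrow> ('v \<times> 'v) set \<Rightarrow> bool" where
  "exchange E B B' \<longleftrightarrow> (\<exists>e_out e_in. e_out \<in> B \<and> e_in \<in> E - B \<and> B' = insert e_in (B - {e_out}))"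

definition neighbouring :: "'v::finite set \<Rightarrow> ('v \<times> 'v) set \<Rightarrow> ('v \<times> 'v \<Rightarrow> real) \<Rightarrow> ('v \<times> 'v \<Rightarrow> real) \<Rightarrow> ('v \<Rightarrow> real) \<Rightarrow> ('v \<Rightarrow> real) \<Rightarrow> bool" where
  "neighbouring Vmax E w lam nu nu' \<longleftrightarrow> (\<exists>B B'. basis_valuation Vmax E w lam B nu \<and>
      exchange E B B' \<and> basis_valuation Vmax E w lam B' nu')"

definition improving :: "'v::finite set \<Rightarrow> ('v \<times> 'v) set \<Rightarrow> ('v \<times> 'v \<Rightarrow> real) \<Rightarrow> ('v \<times> 'v \<Rightarrow> real) \<Rightarrow> bool" where
  "improving Vmax E w lam \<longleftrightarrow> sharp Vmax E w lam \<and>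
     (\<forall>\<sigma> nu B. joint_strategy E \<sigma> \<longrightarrow> basis_valuation Vmax E w lam B nu \<longrightarrow>
        \<not> minimises Vmax E w lam \<sigma> nu \<longrightarrow>
        (\<exists>B' nu'. exchange E B B' \<and> basis_valuation Vmax E w lam B' nu' \<and>
                  f_strat Vmax w lam \<sigma> nu' < f_strat Vmax w lam \<sigma> nu))"

end

theory Submission
  imports Defs
begin

(* Restricted to the edges E', the game is still a discounted game, so its Bellman operator is a
   sup-norm contraction with a fixed point y, and some strategy tau inside E' is tight at y, i.e.
   f_tau(y) = 0.  As E' lies in S^sigma_nu, f_tau(nu) = f_sigma(nu) > 0.  Every inequation tight at
   nu belongs to E_nu, a subset of E', so y satisfies it; hence a short step from nu towards y stays
   in H, and since f_tau is affine, nu does not minimise f_tau.  The game being improving then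
   yields a neighbour nu'' with f_tau(nu'') < f_tau(nu) = f_sigma(nu), and any such pair beats sigma
   because min f_sigma' <= f_sigma'(nu'') < f_sigma(nu) = min f_sigma. *)

lemma offset_nonneg_iff: "0 \<le> offset Vmax w lam x e \<longleftrightarrow> ineq Vmax w lam e x"
  unfolding offset_def ineq_def by auto

lemma offset_convex_combination:
  "offset Vmax w lam (\<lambda>u. (1 - t) * x u + t * y u) e =
     (1 - t) * offset Vmax w lam x e + t * offset Vmax w lam y e"
  unfolding offset_def by (simp add: algebra_simps)

lemma f_strat_convex_combination:
  "f_strat Vmax w lam \<sigma> (\<lambda>u. (1 - t) * x u + t * y u) =
     (1 - t) * f_strat Vmax w lam \<sigma> x + t * f_strat Vmax w lam \<sigma> y"
  unfolding f_strat_def offset_convex_combination by (simp add: sum.distrib sum_distrib_left)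

lemma f_strat_nonneg:
  "solves_H Vmax E w lam x \<Longrightarrow> joint_strategy E \<sigma> \<Longrightarrow> 0 \<le> f_strat Vmax w lam \<sigma> x"
  unfolding f_strat_def solves_H_def joint_strategy_def
  by (intro sum_nonneg) (simp add: offset_nonneg_iff)

lemma f_strat_eq_if_in_S_set:
  assumes "\<forall>v. (v, \<tau> v) \<in> S_set Vmax E w lam \<sigma> x"
  shows "f_strat Vmax w lam \<tau> x = f_strat Vmax w lam \<sigma> x"
  using assms unfolding f_strat_def S_set_def by simp

lemma solves_H_towards_tight_solution:
  fixes x y :: "'v::finite \<Rightarrow> real"
  assumes x: "solves_H Vmax E w lam x"
    and y: "solves_H Vmax (E_tight Vmax E w lam x) w lam y"
  obtains t where "0 < t" "solves_H Vmax E w lam (\<lambda>u. (1 - t) * x u + t * y u)"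
proof -
  let ?z = "\<lambda>t e. (1 - t) * offset Vmax w lam x e + t * offset Vmax w lam y e"
  have "\<forall>\<^sub>F t in at_right 0. 0 \<le> ?z t e" if "e \<in> E" for e
  proof (cases "offset Vmax w lam x e = 0")
    case True
    then have "e \<in> E_tight Vmax E w lam x"
      using that by (simp add: E_tight_def)
    then have "0 \<le> offset Vmax w lam y e"
      using y by (simp add: solves_H_def offset_nonneg_iff)
    with True show ?thesis
      by (auto intro: eventually_mono[OF eventually_at_right_less[of 0]])
  next
    case False
    then have "0 < offset Vmax w lam x e"
      using x that by (simp add: solves_H_def order_less_le offset_nonneg_iff[symmetric])
    moreover have "((\<lambda>t. ?z t e) \<longlongrightarrow> ?z 0 e) (at_right 0)"
      by (intro tendsto_intros)
    ultimately have "\<forall>\<^sub>F t in at_right 0. 0 < ?z t e"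
      by (intro order_tendstoD(1)) simp_all
    then show ?thesis
      by (rule eventually_mono) simp
  qed
  then have "\<forall>\<^sub>F t in at_right 0. \<forall>e\<in>E. 0 \<le> ?z t e"
    by (intro eventually_ball_finite) auto
  then have "\<forall>\<^sub>F t in at_right 0. 0 < t \<and> (\<forall>e\<in>E. 0 \<le> ?z t e)"
    by (simp add: eventually_conj_iff eventually_at_right_less)
  then obtain t where "0 < t" "\<forall>e\<in>E. 0 \<le> ?z t e"
    using eventually_happens'[OF trivial_limit_at_right_real] by blast
  then show ?thesis
    using that by (simp add: solves_H_def offset_convex_combination offset_nonneg_iff[symmetric])
qed

lemma minimises_le_on_tight_solutions:
  assumes min: "minimises Vmax E w lam \<sigma> x"
    and y: "solves_H Vmax (E_tight Vmax E w lam x) w lam y"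
  shows "f_strat Vmax w lam \<sigma> x \<le> f_strat Vmax w lam \<sigma> y"
proof -
  have x: "solves_H Vmax E w lam x"
    using min by (simp add: minimises_def)
  obtain t where t: "0 < t" and z: "solves_H Vmax E w lam (\<lambda>u. (1 - t) * x u + t * y u)"
    using solves_H_towards_tight_solution[OF x y] .
  have "f_strat Vmax w lam \<sigma> x \<le> f_strat Vmax w lam \<sigma> (\<lambda>u. (1 - t) * x u + t * y u)"
    using min z by (simp add: minimises_def)
  also have "\<dots> = f_strat Vmax w lam \<sigma> x + t * (f_strat Vmax w lam \<sigma> y - f_strat Vmax w lam \<sigma> x)"
    unfolding f_strat_convex_combination by (simp add: algebra_simps)
  finally show ?thesis
    using t by (simp add: zero_le_mult_iff)
qed

lemma neighbouring_solves_H: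
  "neighbouring Vmax E w lam x x' \<Longrightarrow> solves_H Vmax E w lam x'"
  by (auto simp: neighbouring_def basis_valuation_def)

lemma improving_neighbour_decreases:
  assumes "improving Vmax E w lam" "joint_strategy E \<sigma>" "is_basis_valuation Vmax E w lam x"
    and "\<not> minimises Vmax E w lam \<sigma> x"
  obtains x' where "neighbouring Vmax E w lam x x'"
    "f_strat Vmax w lam \<sigma> x' < f_strat Vmax w lam \<sigma> x"
  using assms unfolding improving_def is_basis_valuation_def neighbouring_def by blast

lemma better_if_below_minimum:
  assumes "minimises Vmax E w lam \<sigma> x" "solves_H Vmax E w lam y" "joint_strategy E \<sigma>'"
    and "f_strat Vmax w lam \<sigma>' y < f_strat Vmax w lam \<sigma> x"
  shows "better Vmax E w lam \<sigma>' \<sigma>"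
proof -
  have "min_f Vmax E w lam \<sigma> = f_strat Vmax w lam \<sigma> x"
    using assms(1) unfolding min_f_def minimises_def by (intro cInf_eq_minimum) auto
  moreover have "min_f Vmax E w lam \<sigma>' \<le> f_strat Vmax w lam \<sigma>' y"
    unfolding min_f_def using assms(2) f_strat_nonneg[OF _ assms(3)]
    by (intro cInf_lower bdd_belowI[of _ 0]) auto
  ultimately show ?thesis
    using assms(4) unfolding better_def by linarith
qed

lemma sup_contraction_has_fixpoint:
  fixes F :: "('i::finite \<Rightarrow> real) \<Rightarrow> 'i \<Rightarrow> real"
  assumes q: "0 \<le> q" "q < 1"
    and contr: "\<And>x y D v. \<forall>u. \<bar>x u - y u\<bar> \<le> D \<Longrightarrow> \<bar>F x v - F y v\<bar> \<le> q * D"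
  shows "\<exists>x. F x = x"
proof -
  define xs where "xs n = (F ^^ n) (\<lambda>_. 0)" for n
  have xs_Suc: "xs (Suc n) = F (xs n)" for n
    by (simp add: xs_def)
  define D where "D = (\<Sum>u\<in>UNIV. \<bar>xs 1 u - xs 0 u\<bar>)"
  have step_bound: "\<bar>xs (Suc n) u - xs n u\<bar> \<le> D * q ^ n" for n u
  proof (induction n arbitrary: u)
    case 0
    show ?case
      unfolding D_def by (auto intro: member_le_sum[where f = "\<lambda>u. \<bar>xs 1 u - xs 0 u\<bar>", simplified])
  next
    case (Suc n)
    then show ?case
      using contr[of "xs (Suc n)" "xs n" "D * q ^ n"] by (simp add: xs_Suc mult_ac)
  qed
  define L where "L u = xs 0 u + (\<Sum>n. xs (Suc n) u - xs n u)" for u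
  have xs_lim: "(\<lambda>n. xs n u) \<longlonglongrightarrow> L u" for u
  proof -
    have "summable (\<lambda>n. D * q ^ n)"
      using q by (intro summable_mult summable_geometric) auto
    then have "summable (\<lambda>n. xs (Suc n) u - xs n u)"
      by (rule summable_comparison_test') (use step_bound in auto)
    then have "(\<lambda>n. xs 0 u + (\<Sum>i<n. xs (Suc i) u - xs i u)) \<longlonglongrightarrow> L u"
      unfolding L_def by (intro tendsto_add tendsto_const summable_LIMSEQ)
    then show ?thesis
      using sum_lessThan_telescope[of "\<lambda>n. xs n u"] by simp
  qed
  define dist_L where "dist_L n = (\<Sum>u\<in>UNIV. \<bar>xs n u - L u\<bar>)" for n
  have "dist_L \<longlonglongrightarrow> (\<Sum>u\<in>UNIV. \<bar>L u - L u\<bar>)"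
    unfolding dist_L_def by (intro tendsto_intros xs_lim)
  then have dist_L_lim: "dist_L \<longlonglongrightarrow> 0"
    by simp
  have "F L v = L v" for v
  proof -
    have "\<bar>F (xs n) v - F L v\<bar> \<le> q * dist_L n" for n
      by (rule contr) (auto simp: dist_L_def intro: member_le_sum[where f = "\<lambda>u. \<bar>xs n u - L u\<bar>", simplified])
    then have "(\<lambda>n. F (xs n) v - F L v) \<longlonglongrightarrow> 0"
      by (intro tendsto_0_le[OF dist_L_lim, of _ q]) (auto simp: dist_L_def mult_ac)
    then have "(\<lambda>n. xs (Suc n) v) \<longlonglongrightarrow> F L v"
      by (simp add: xs_Suc LIM_zero_cancel)
    moreover have "(\<lambda>n. xs (Suc n) v) \<longlonglongrightarrow> L v"
      using LIMSEQ_Suc[OF xs_lim] .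
    ultimately show ?thesis
      by (rule LIMSEQ_unique)
  qed
  then show ?thesis
    by blast
qed

lemma abs_Max_image_diff_le:
  fixes f g :: "'a \<Rightarrow> real"
  assumes "finite A" "A \<noteq> {}" "\<forall>a\<in>A. \<bar>f a - g a\<bar> \<le> D"
  shows "\<bar>Max (f ` A) - Max (g ` A)\<bar> \<le> D"
proof -
  have "Max (h ` A) \<le> Max (k ` A) + D" if "\<forall>a\<in>A. h a \<le> k a + D" for h k :: "'a \<Rightarrow> real"
    using assms(1,2) that by (auto intro: order.trans[OF _ add_right_mono[OF Max_ge]])
  moreover have "\<forall>a\<in>A. f a \<le> g a + D" "\<forall>a\<in>A. g a \<le> f a + D"
    using assms(3) by (auto simp: abs_le_iff)
  ultimately have "Max (f ` A) \<le> Max (g ` A) + D" "Max (g ` A) \<le> Max (f ` A) + D"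
    by blast+
  then show ?thesis
    by linarith
qed

lemma abs_Min_image_diff_le:
  fixes f g :: "'a \<Rightarrow> real"
  assumes "finite A" "A \<noteq> {}" "\<forall>a\<in>A. \<bar>f a - g a\<bar> \<le> D"
  shows "\<bar>Min (f ` A) - Min (g ` A)\<bar> \<le> D"
proof -
  have "Min (h ` A) \<le> Min (k ` A) + D" if "\<forall>a\<in>A. h a \<le> k a + D" for h k :: "'a \<Rightarrow> real"
  proof -
    have "Min (k ` A) \<in> k ` A"
      using assms(1,2) by simp
    then obtain a where a: "a \<in> A" "Min (k ` A) = k a"
      by blast
    have "Min (h ` A) \<le> h a" "h a \<le> k a + D"
      using assms(1) a(1) that by auto
    then show ?thesis
      using a(2) by linarith
  qed
  moreover have "\<forall>a\<in>A. f a \<le> g a + D" "\<forall>a\<in>A. g a \<le> f a + D"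
    using assms(3) by (auto simp: abs_le_iff)
  ultimately have "Min (f ` A) \<le> Min (g ` A) + D" "Min (g ` A) \<le> Min (f ` A) + D"
    by blast+
  then show ?thesis
    by linarith
qed

definition bellman ::
    "'v::finite set \<Rightarrow> ('v \<times> 'v) set \<Rightarrow> ('v \<times> 'v \<Rightarrow> real) \<Rightarrow> ('v \<times> 'v \<Rightarrow> real) \<Rightarrow>
      ('v \<Rightarrow> real) \<Rightarrow> 'v \<Rightarrow> real" where
  "bellman Vmax E w lam x v =
     (let vals = (\<lambda>e. w e + lam e * x (snd e)) ` {e \<in> E. fst e = v}
      in if v \<in> Vmax then Max vals else Min vals)"

lemma discounted_game_out_edges:
  assumes "discounted_game Vmax E lam"
  shows "finite {e \<in> E. fst e = v}" "{e \<in> E. fst e = v} \<noteq> {}"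
  using assms unfolding discounted_game_def by force+

lemma discounted_game_discount_bound:
  assumes "discounted_game Vmax E lam"
  obtains q where "0 \<le> q" "q < 1" "\<forall>e\<in>E. lam e \<le> q"
proof
  have "Max (insert 0 (lam ` E)) \<in> insert 0 (lam ` E)"
    by (rule Max_in) auto
  then show "0 \<le> Max (insert 0 (lam ` E))" "Max (insert 0 (lam ` E)) < 1"
      "\<forall>e\<in>E. lam e \<le> Max (insert 0 (lam ` E))"
    using assms unfolding discounted_game_def by auto
qed

lemma bellman_lipschitz:
  assumes game: "discounted_game Vmax E lam" and q: "\<forall>e\<in>E. lam e \<le> q"
    and dist: "\<forall>u. \<bar>x u - y u\<bar> \<le> D"
  shows "\<bar>bellman Vmax E w lam x v - bellman Vmax E w lam y v\<bar> \<le> q * D"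
proof -
  have "\<bar>(w e + lam e * x (snd e)) - (w e + lam e * y (snd e))\<bar> \<le> q * D" if "e \<in> E" for e
  proof -
    have "0 \<le> lam e" "lam e \<le> q"
      using game q that unfolding discounted_game_def by auto
    moreover have "0 \<le> D"
      using dist by (meson abs_ge_zero order_trans)
    ultimately have "lam e * \<bar>x (snd e) - y (snd e)\<bar> \<le> q * D"
      using dist by (intro mult_mono) auto
    then show ?thesis
      using \<open>0 \<le> lam e\<close> by (simp add: abs_mult right_diff_distrib[symmetric])
  qed
  then have "\<forall>e\<in>{e \<in> E. fst e = v}.
      \<bar>(w e + lam e * x (snd e)) - (w e + lam e * y (snd e))\<bar> \<le> q * D"
    by blast
  with discounted_game_out_edges[OF game, of v] show ?thesis
    unfolding bellman_def Let_def
    by (cases "v \<in> Vmax") (simp_all only: if_True if_False,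
        (rule abs_Max_image_diff_le abs_Min_image_diff_le; assumption)+)
qed

lemma bellman_fixpoint_tight:
  assumes game: "discounted_game Vmax E lam" and fixpoint: "bellman Vmax E w lam x = x"
  shows "solves_H Vmax E w lam x"
    and "\<exists>\<sigma>. joint_strategy E \<sigma> \<and> f_strat Vmax w lam \<sigma> x = 0"
proof -
  define vals where "vals v = (\<lambda>e. w e + lam e * x (snd e)) ` {e \<in> E. fst e = v}" for v
  have x_eq: "x v = (if v \<in> Vmax then Max (vals v) else Min (vals v))" for v
    using fun_cong[OF fixpoint, of v] unfolding bellman_def Let_def vals_def by (rule sym)
  have vals: "finite (vals v)" "vals v \<noteq> {}" for v
    using discounted_game_out_edges[OF game, of v] by (simp_all add: vals_def)
  have "ineq Vmax w lam e x" if "e \<in> E" for e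
  proof -
    have "w e + lam e * x (snd e) \<in> vals (fst e)"
      using that by (auto simp: vals_def)
    then show ?thesis
      using vals[of "fst e"] x_eq[of "fst e"] by (simp add: ineq_def)
  qed
  then show "solves_H Vmax E w lam x"
    by (simp add: solves_H_def)
  have "\<exists>v'. (v, v') \<in> E \<and> offset Vmax w lam x (v, v') = 0" for v
  proof -
    have "x v \<in> vals v"
      using vals[of v] x_eq[of v] by simp
    then show ?thesis
      by (force simp: offset_def vals_def)
  qed
  then obtain \<sigma> where "\<And>v. (v, \<sigma> v) \<in> E \<and> offset Vmax w lam x (v, \<sigma> v) = 0"
    by metis
  then show "\<exists>\<sigma>. joint_strategy E \<sigma> \<and> f_strat Vmax w lam \<sigma> x = 0"
    unfolding joint_strategy_def f_strat_def by (intro exI[of _ \<sigma>]) simp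
qed

lemma discounted_game_tight_solution:
  assumes game: "discounted_game Vmax E lam"
  obtains x \<sigma> where "solves_H Vmax E w lam x" "joint_strategy E \<sigma>" "f_strat Vmax w lam \<sigma> x = 0"
proof -
  obtain q where q: "0 \<le> q" "q < 1" "\<forall>e\<in>E. lam e \<le> q"
    using discounted_game_discount_bound[OF game] .
  have "\<exists>x. bellman Vmax E w lam x = x"
    by (rule sup_contraction_has_fixpoint[OF q(1,2)]) (erule bellman_lipschitz[OF game q(3)])
  then obtain x where "bellman Vmax E w lam x = x"
    by blast
  then show ?thesis
    using bellman_fixpoint_tight[OF game] that by blast
qed

theorem theorem4p4:
  fixes Vmax :: "'v::finite set" and E :: "('v \<times> 'v) set"
    and w lam :: "'v \<times> 'v \<Rightarrow> real"
    and \<sigma> :: "'v \<Rightarrow> 'v" and nu :: "'v \<Rightarrow> real" and E' :: "('v \<times> 'v) set"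
  assumes game: "discounted_game Vmax E lam"
    and impr: "improving Vmax E w lam"
    and strat: "joint_strategy E \<sigma>"
    and bv: "is_basis_valuation Vmax E w lam nu"
    and mini: "minimises Vmax E w lam \<sigma> nu"
    and nonzero: "f_strat Vmax w lam \<sigma> nu \<noteq> 0"
    and no_local: "\<forall>e\<in>E. offset Vmax w lam nu e \<ge> offset Vmax w lam nu (fst e, \<sigma> (fst e))"
    and E'_lower: "E_tight Vmax E w lam nu \<subseteq> E'"
    and E'_upper: "E' \<subseteq> S_set Vmax E w lam \<sigma> nu"
    and E'_out: "\<forall>v. \<exists>v'. (v, v') \<in> E'"
  shows "(\<exists>nu'' \<sigma>'. neighbouring Vmax E w lam nu nu'' \<and> joint_strategy E \<sigma>' \<and>
            f_strat Vmax w lam \<sigma>' nu'' < f_strat Vmax w lam \<sigma> nu \<and>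
            (\<forall>v. (v, \<sigma>' v) \<in> E'))
       \<and> (\<forall>nu'' \<sigma>'. neighbouring Vmax E w lam nu nu'' \<and> joint_strategy E \<sigma>' \<and>
            f_strat Vmax w lam \<sigma>' nu'' < f_strat Vmax w lam \<sigma> nu
            \<longrightarrow> better Vmax E w lam \<sigma>' \<sigma>)"
proof -
  have E'_sub: "E' \<subseteq> E"
    using E'_upper by (auto simp: S_set_def)
  have "discounted_game Vmax E' lam"
    using game E'_sub E'_out by (auto simp: discounted_game_def)
  then obtain y \<tau> where y: "solves_H Vmax E' w lam y"
    and \<tau>: "joint_strategy E' \<tau>" and f_\<tau>_y: "f_strat Vmax w lam \<tau> y = 0"
    by (rule discounted_game_tight_solution)
  have \<tau>_E: "joint_strategy E \<tau>"
    using \<tau> E'_sub by (auto simp: joint_strategy_def)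
  have f_\<tau>_nu: "f_strat Vmax w lam \<tau> nu = f_strat Vmax w lam \<sigma> nu"
    using \<tau> E'_upper by (intro f_strat_eq_if_in_S_set) (auto simp: joint_strategy_def)
  have y_tight: "solves_H Vmax (E_tight Vmax E w lam nu) w lam y"
    using y E'_lower by (auto simp: solves_H_def)
  have "f_strat Vmax w lam \<tau> nu \<le> 0" if "minimises Vmax E w lam \<tau> nu"
    using minimises_le_on_tight_solutions[OF that y_tight] f_\<tau>_y by simp
  moreover have "0 \<le> f_strat Vmax w lam \<sigma> nu"
    using f_strat_nonneg[OF _ strat] mini by (simp add: minimises_def)
  ultimately have "\<not> minimises Vmax E w lam \<tau> nu"
    using nonzero f_\<tau>_nu by force
  then obtain nu' where "neighbouring Vmax E w lam nu nu'"
    and "f_strat Vmax w lam \<tau> nu' < f_strat Vmax w lam \<tau> nu"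
    using improving_neighbour_decreases[OF impr \<tau>_E bv] by blast
  moreover have "better Vmax E w lam \<sigma>' \<sigma>"
    if "neighbouring Vmax E w lam nu nu''" "joint_strategy E \<sigma>'"
      and "f_strat Vmax w lam \<sigma>' nu'' < f_strat Vmax w lam \<sigma> nu" for nu'' \<sigma>'
    using better_if_below_minimum[OF mini neighbouring_solves_H[OF that(1)] that(2,3)] .
  ultimately show ?thesis
    using \<tau> \<tau>_E f_\<tau>_nu by (auto simp: joint_strategy_def)
qed

end
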